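(* Let $k\ge1$ and $[k+]=\{1,2,\ldots,k\}$. For every set $A$ with $\emptyset\neq A\subsetneq[k+]$ we have $d([k+])\ge d(A)$, and the inequality is strict for $k\neq3$.
   Context: For $A,B\subseteq\mathbb{N}=\{0,1,\ldots\}$, $A+B=\{a+b:a\in A,b\in B\}$. For a nonempty finite $C\subseteq\mathbb{N}$, $d(C)$ is the number of sets $B\subseteq\mathbb{N}$ such that $B+D=C$ for some $D\subseteq\mathbb{N}$. *)

theory Defs
  imports Main
begin

definition sumset :: "nat set \<Rightarrow> nat set \<Rightarrow> nat set" where
  "sumset A B = {a + b | a b. a \<in> A \<and> b \<in> B}"

definition d :: "nat set \<Rightarrow> nat" where
  "d C = card {B. \<exists>D. sumset B D = C}"

end

theory Submission
  imports Defs
begin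

text \<open>
  Let N(C) be the set of summands of C containing 0 and T(n) = card N({0..n}).
  Every summand of C is a translate of a member of N(C) by at most min C, so
  d(C) <= (min C + 1) T(max C - min C) once N(C) is embedded into N({0..max C - min C});
  the embedding adds to B all positions x <= max B with x + min C not in C, which no
  member of N(C) can use, and it misses an initial interval whenever C has a gap.
  Conversely the translates by 0 and 1 of N({0..k-1}) give d({1..k}) >= 2 T(k-1).
  It remains to see that T grows fast. The increments E(n) = T(n+1) - T(n) satisfy
  E(n) + E(n+1) <= E(n+2), by raising the maximum of a new summand by one resp. two;
  hence E(n+1) >= T(n), so 3 T(n) <= 2 T(n+1), strictly unless n = 1, and iterating,
  (a + 1) T(k - a) <= 2 T(k - 1) for a = min A.
\<close>

section \<open>Summands containing 0\<close>

lemma mem_sumset_iff: "z \<in> sumset B D \<longleftrightarrow> (\<exists>b\<in>B. \<exists>e\<in>D. z = b + e)"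
  unfolding sumset_def by blast

lemma sumset_shift:
  "sumset ((\<lambda>b. b + s) ` B) ((\<lambda>e. e + u) ` D) = (\<lambda>c. c + (s + u)) ` sumset B D"
  by (fastforce simp: mem_sumset_iff image_iff)

lemma sumset_shift_swap: "sumset ((\<lambda>b. b + s) ` B) D = sumset B ((\<lambda>e. e + s) ` D)"
  using sumset_shift[of s B 0 D] sumset_shift[of 0 B s D] by simp

lemma summand_le_Max:
  assumes "sumset B D = C" "finite C" "C \<noteq> {}" "b \<in> B"
  shows "b \<le> Max C"
proof -
  obtain e where "e \<in> D" using assms(1,3) unfolding sumset_def by auto
  then have "b + e \<in> C" using assms(1,4) mem_sumset_iff by blast
  then have "b + e \<le> Max C" using assms(2) by simp
  then show ?thesis by simp
qed

lemma finite_summands: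
  assumes "finite C" "C \<noteq> {}"
  shows "finite {B. \<exists>D. sumset B D = C}"
proof (rule finite_subset[of _ "Pow {..Max C}"])
  show "{B. \<exists>D. sumset B D = C} \<subseteq> Pow {..Max C}"
    using summand_le_Max[OF _ assms] by blast
qed simp

lemma summand_finite_nonempty:
  assumes "sumset B D = C" "finite C" "C \<noteq> {}"
  shows "finite B" "B \<noteq> {}"
proof -
  show "finite B"
    using summand_le_Max[OF assms] by (intro finite_subset[of B "{..Max C}"]) auto
  show "B \<noteq> {}" using assms(1,3) unfolding sumset_def by auto
qed

definition zero_summands :: "nat set \<Rightarrow> nat set set" where
  "zero_summands C = {B. 0 \<in> B \<and> (\<exists>D. sumset B D = C)}"

lemma finite_zero_summands: "finite C \<Longrightarrow> C \<noteq> {} \<Longrightarrow> finite (zero_summands C)"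
  unfolding zero_summands_def by (rule finite_subset[OF _ finite_summands]) auto

lemma summand_eq_shift_zero_summand:
  assumes "sumset B D = C" "finite C" "C \<noteq> {}"
  shows "\<exists>t B'. t \<le> Min C \<and> B' \<in> zero_summands C \<and> B = (\<lambda>b. b + t) ` B'"
proof -
  have B: "finite B" "B \<noteq> {}" using summand_finite_nonempty[OF assms] by auto
  define t where "t = Min B"
  define B' where "B' = (\<lambda>b. b - t) ` B"
  have "\<forall>b\<in>B. b - t + t = b" using B unfolding t_def by simp
  then have B_eq: "B = (\<lambda>b. b + t) ` B'"
    unfolding B'_def image_image by simp
  have "sumset B' ((\<lambda>e. e + t) ` D) = C"
    unfolding sumset_shift_swap[symmetric] B_eq[symmetric] by (rule assms(1))
  moreover have "0 \<in> B'"
    unfolding B'_def t_def using B by (intro image_eqI[of _ _ "Min B"]) auto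
  moreover have "t \<le> Min C"
  proof -
    have "Min C \<in> sumset B D" using assms by simp
    then obtain b e where "b \<in> B" "Min C = b + e"
      unfolding mem_sumset_iff by blast
    then show ?thesis unfolding t_def using B by (simp add: trans_le_add1)
  qed
  ultimately show ?thesis unfolding zero_summands_def using B_eq by blast
qed

lemma d_le_card_zero_summands:
  assumes C: "finite C" "C \<noteq> {}"
  shows "d C \<le> (Min C + 1) * card (zero_summands C)"
proof -
  define shift where "shift p = (\<lambda>b. b + fst p) ` snd p" for p :: "nat \<times> nat set"
  have "B \<in> shift ` ({..Min C} \<times> zero_summands C)" if S: "sumset B D = C" for B D
  proof -
    obtain t B' where "t \<le> Min C" "B' \<in> zero_summands C" "B = (\<lambda>b. b + t) ` B'"
      using summand_eq_shift_zero_summand[OF S C] by blast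
    then show ?thesis unfolding shift_def by (intro image_eqI[of _ _ "(t, B')"]) auto
  qed
  then have "{B. \<exists>D. sumset B D = C} \<subseteq> shift ` ({..Min C} \<times> zero_summands C)"
    by blast
  then have "d C \<le> card (shift ` ({..Min C} \<times> zero_summands C))"
    unfolding d_def by (rule card_mono[rotated]) (simp add: finite_zero_summands[OF C])
  also have "\<dots> \<le> card ({..Min C} \<times> zero_summands C)"
    by (rule card_image_le) (simp add: finite_zero_summands[OF C])
  finally show ?thesis by (simp add: card_cartesian_product)
qed

lemma Min_shift_zero_summand:
  assumes "B \<in> zero_summands C" "finite C" "C \<noteq> {}"
  shows "Min ((\<lambda>b. b + t) ` B) = t"
proof -
  obtain D where "sumset B D = C" "0 \<in> B" using assms(1) unfolding zero_summands_def by blast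
  then show ?thesis using summand_finite_nonempty[OF _ assms(2,3)]
    by (intro Min_eqI) force+
qed

lemma card_zero_summands_interval_le_d:
  "(s + 1) * card (zero_summands {0..n}) \<le> d {s..s + n}"
proof -
  define shift where "shift p = (\<lambda>b. b + fst p) ` snd p" for p :: "nat \<times> nat set"
  have into: "shift p \<in> {B. \<exists>D. sumset B D = {s..s + n}}"
    if P: "p \<in> {..s} \<times> zero_summands {0..n}" for p
  proof -
    obtain t B where p: "p = (t, B)" "t \<le> s" "B \<in> zero_summands {0..n}"
      using P by auto
    then obtain D where D: "sumset B D = {0..n}" unfolding zero_summands_def by auto
    have "sumset (shift p) ((\<lambda>e. e + (s - t)) ` D) = (\<lambda>c. c + (t + (s - t))) ` {0..n}"
      unfolding shift_def p(1) by (simp only: fst_conv snd_conv sumset_shift D)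
    also have "\<dots> = {s..s + n}" using p(2) by (simp add: add.commute)
    finally show ?thesis by blast
  qed
  have "inj_on shift ({..s} \<times> zero_summands {0..n})"
  proof (rule inj_onI, clarify)
    fix t B u B'
    assume B: "B \<in> zero_summands {0..n}" and B': "B' \<in> zero_summands {0..n}"
      and eq: "shift (t, B) = shift (u, B')"
    have "t = Min (shift (t, B))" "u = Min (shift (u, B'))"
      unfolding shift_def using Min_shift_zero_summand[OF B] Min_shift_zero_summand[OF B']
      by simp_all
    then have "t = u" using eq by simp
    then show "t = u \<and> B = B'" using eq unfolding shift_def by (simp add: inj_image_eq_iff)
  qed
  then have "(s + 1) * card (zero_summands {0..n})
      = card (shift ` ({..s} \<times> zero_summands {0..n}))"
    by (simp add: card_image card_cartesian_product)
  also have "\<dots> \<le> d {s..s + n}"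
    unfolding d_def using into by (intro card_mono finite_summands) auto
  finally show ?thesis .
qed

section \<open>Summands of an interval\<close>

lemma Max_atLeast0AtMost [simp]: "Max {0..n} = (n::nat)"
  by (rule Max_eqI) auto

abbreviation interval_summands :: "nat \<Rightarrow> nat set set" where
  "interval_summands n \<equiv> zero_summands {0..n}"

lemma sumset_atLeast0AtMost_cover:
  assumes "0 \<in> Y" "Y \<subseteq> {..n}" "\<forall>x\<le>n. \<exists>y\<in>Y. y \<le> x \<and> x \<le> y + (n - Max Y)"
  shows "sumset Y {0..n - Max Y} = {0..n}"
proof (rule subset_antisym)
  have "finite Y" using assms(2) finite_subset by blast
  then have "Max Y \<in> Y" "\<forall>y\<in>Y. y \<le> Max Y" using assms(1) Max_in by auto
  then have "Max Y \<le> n" "\<forall>y\<in>Y. y \<le> Max Y" using assms(2) by auto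
  then show "sumset Y {0..n - Max Y} \<subseteq> {0..n}"
    unfolding mem_sumset_iff subset_iff by fastforce
  show "{0..n} \<subseteq> sumset Y {0..n - Max Y}"
  proof
    fix x assume "x \<in> {0..n}"
    then obtain y where "y \<in> Y" "y \<le> x" "x \<le> y + (n - Max Y)" using assms(3) by auto
    then show "x \<in> sumset Y {0..n - Max Y}"
      unfolding mem_sumset_iff by (intro bexI[of _ y] bexI[of _ "x - y"]) auto
  qed
qed

lemma interval_summands_iff:
  "Y \<in> interval_summands n \<longleftrightarrow>
     0 \<in> Y \<and> Y \<subseteq> {..n} \<and> (\<forall>x\<le>n. \<exists>y\<in>Y. y \<le> x \<and> x \<le> y + (n - Max Y))"
proof
  assume "Y \<in> interval_summands n"
  then obtain D where S: "sumset Y D = {0..n}" and "0 \<in> Y"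
    unfolding zero_summands_def by blast
  have Y: "finite Y" "Y \<noteq> {}" using summand_finite_nonempty[OF S] by auto
  have "Y \<subseteq> {..n}" using summand_le_Max[OF S] by auto
  moreover have "\<exists>y\<in>Y. y \<le> x \<and> x \<le> y + (n - Max Y)" if "x \<le> n" for x
  proof -
    have "x \<in> sumset Y D" using S that by simp
    then obtain y e where y: "y \<in> Y" "e \<in> D" "x = y + e"
      unfolding mem_sumset_iff by blast
    have "Max Y + e \<in> sumset Y D"
      using Y y(2) Max_in unfolding mem_sumset_iff by blast
    then have "Max Y + e \<le> n" using S by simp
    then show ?thesis using y by (intro bexI[of _ y]) auto
  qed
  ultimately show "0 \<in> Y \<and> Y \<subseteq> {..n} \<and> (\<forall>x\<le>n. \<exists>y\<in>Y. y \<le> x \<and> x \<le> y + (n - Max Y))"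
    using \<open>0 \<in> Y\<close> by blast
next
  assume "0 \<in> Y \<and> Y \<subseteq> {..n} \<and> (\<forall>x\<le>n. \<exists>y\<in>Y. y \<le> x \<and> x \<le> y + (n - Max Y))"
  then show "Y \<in> interval_summands n"
    unfolding zero_summands_def using sumset_atLeast0AtMost_cover by blast
qed

lemma interval_summandsI:
  "0 \<in> Y \<Longrightarrow> Y \<subseteq> {..n} \<Longrightarrow> (\<And>x. x \<le> n \<Longrightarrow> \<exists>y\<in>Y. y \<le> x \<and> x \<le> y + (n - Max Y))
    \<Longrightarrow> Y \<in> interval_summands n"
  by (simp add: interval_summands_iff)

lemma interval_summandsD:
  assumes "Y \<in> interval_summands n"
  shows "finite Y" "0 \<in> Y" "Y \<subseteq> {..n}" "Max Y \<in> Y" "Max Y \<le> n"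
    and "x \<le> n \<Longrightarrow> \<exists>y\<in>Y. y \<le> x \<and> x \<le> y + (n - Max Y)"
proof -
  have Y: "0 \<in> Y" "Y \<subseteq> {..n}" "\<forall>x\<le>n. \<exists>y\<in>Y. y \<le> x \<and> x \<le> y + (n - Max Y)"
    using assms interval_summands_iff by auto
  show "finite Y" using Y(2) finite_subset by blast
  then show "Max Y \<in> Y" using Y(1) by (intro Max_in) auto
  then show "Max Y \<le> n" using Y(2) by auto
  show "0 \<in> Y" "Y \<subseteq> {..n}" "x \<le> n \<Longrightarrow> \<exists>y\<in>Y. y \<le> x \<and> x \<le> y + (n - Max Y)" using Y by auto
qed

lemma finite_interval_summands: "finite (interval_summands n)"
  by (simp add: finite_zero_summands)

lemma atLeast0AtMost_mem_interval_summands: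
  assumes "p \<le> n"
  shows "{0..p} \<in> interval_summands n"
proof (rule interval_summandsI)
  fix x assume "x \<le> n"
  then show "\<exists>y\<in>{0..p}. y \<le> x \<and> x \<le> y + (n - Max {0..p})"
    using assms by (intro bexI[of _ "min x p"]) auto
qed (use assms in auto)

lemma atLeast0AtMost_not_mem_interval_summands: "n < p \<Longrightarrow> {0..p} \<notin> interval_summands n"
  using interval_summandsD(5)[of "{0..p}" n] by auto

lemma interval_summand_Max_eq:
  assumes "Y \<in> interval_summands n" "Max Y = n"
  shows "Y = {0..n}"
proof
  show "Y \<subseteq> {0..n}" using interval_summandsD(3)[OF assms(1)] by auto
  show "{0..n} \<subseteq> Y"
  proof
    fix x assume "x \<in> {0..n}"
    then obtain y where "y \<in> Y" "y \<le> x" "x \<le> y + (n - Max Y)"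
      using interval_summandsD(6)[OF assms(1)] by auto
    then show "x \<in> Y" using assms(2) by simp
  qed
qed

lemma interval_summands_0: "interval_summands 0 = {{0}}"
proof (intro equalityI subsetI)
  fix Y assume Y: "Y \<in> interval_summands 0"
  then show "Y \<in> {{0}}" using interval_summandsD(2,3)[OF Y] by auto
qed (use atLeast0AtMost_mem_interval_summands[of 0 0] in auto)

lemma interval_summands_mono: "interval_summands n \<subseteq> interval_summands (Suc n)"
proof
  fix Y assume Y: "Y \<in> interval_summands n"
  show "Y \<in> interval_summands (Suc n)"
  proof (rule interval_summandsI)
    show "0 \<in> Y" "Y \<subseteq> {..Suc n}" using interval_summandsD(2,3)[OF Y] by auto
    fix x assume "x \<le> Suc n"
    show "\<exists>y\<in>Y. y \<le> x \<and> x \<le> y + (Suc n - Max Y)"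
    proof (cases "x \<le> n")
      case True
      then obtain y where "y \<in> Y" "y \<le> x" "x \<le> y + (n - Max Y)"
        using interval_summandsD(6)[OF Y] by blast
      then show ?thesis by (intro bexI[of _ y]) auto
    next
      case False
      then show ?thesis using \<open>x \<le> Suc n\<close> interval_summandsD(4,5)[OF Y]
        by (intro bexI[of _ "Max Y"]) auto
    qed
  qed
qed


section \<open>Growth of the number of interval summands\<close>

definition insert_above :: "nat \<Rightarrow> nat set \<Rightarrow> nat set" where
  "insert_above j Y = insert (Max Y + j) Y"

lemma Max_insert_above: "finite Y \<Longrightarrow> Y \<noteq> {} \<Longrightarrow> Max (insert_above j Y) = Max Y + j"
  unfolding insert_above_def by (simp add: max_def)

lemma insert_above_minus_Max:
  assumes "finite Y" "Y \<noteq> {}" "0 < j"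
  shows "insert_above j Y - {Max (insert_above j Y)} = Y"
proof -
  have "Max Y + j \<notin> Y" using Max_ge[OF assms(1), of "Max Y + j"] assms(3) by auto
  then show ?thesis using assms by (simp add: Max_insert_above insert_above_def)
qed

lemma inj_on_insert_above:
  assumes "0 < j"
  shows "inj_on (insert_above j) {Y. finite Y \<and> Y \<noteq> {}}"
proof (rule inj_onI)
  fix Y Z assume Y: "Y \<in> {Y. finite Y \<and> Y \<noteq> {}}" and Z: "Z \<in> {Y. finite Y \<and> Y \<noteq> {}}"
    and eq: "insert_above j Y = insert_above j Z"
  have "Y = insert_above j Y - {Max (insert_above j Y)}"
    using insert_above_minus_Max[of Y j] Y assms by simp
  also have "\<dots> = insert_above j Z - {Max (insert_above j Z)}" by (simp only: eq)
  also have "\<dots> = Z" using insert_above_minus_Max[of Z j] Z assms by simp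
  finally show "Y = Z" .
qed

text \<open>The new top element leaves a gap of length \<^term>\<open>j - 1\<close>, which the slack
  \<^term>\<open>n - Max Y\<close> has to bridge.\<close>
lemma insert_above_mem_interval_summandsD:
  assumes Y: "finite Y" "0 \<in> Y" and j: "0 < j"
    and Y': "insert_above j Y \<in> interval_summands (n + j)"
  shows "Y \<in> interval_summands n" "Max Y + j \<le> n + 1"
proof -
  have Y_le: "y \<le> Max Y" if "y \<in> Y" for y using Y(1) that by simp
  have Max_mem: "Max Y \<in> Y" using Y by (intro Max_in) auto
  have M: "Max (insert_above j Y) = Max Y + j" using Y by (intro Max_insert_above) auto
  have Mn: "Max Y \<le> n" using interval_summandsD(5)[OF Y'] M by simp
  have slack: "n + j - Max (insert_above j Y) = n - Max Y" unfolding M by simp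
  have below: "\<exists>y\<in>Y. y \<le> x \<and> x \<le> y + (n - Max Y)"
    if x: "x < Max Y + j" "x \<le> n + j" for x
  proof -
    obtain y where y: "y \<in> insert_above j Y" "y \<le> x" "x \<le> y + (n - Max Y)"
      using interval_summandsD(6)[OF Y' x(2)] slack by auto
    then have "y \<in> Y" using x(1) unfolding insert_above_def by auto
    then show ?thesis using y by blast
  qed
  show "Y \<in> interval_summands n"
  proof (rule interval_summandsI)
    show "0 \<in> Y" by (rule Y(2))
    show "Y \<subseteq> {..n}" using Y_le Mn by (auto intro: order_trans)
    fix x assume "x \<le> n"
    show "\<exists>y\<in>Y. y \<le> x \<and> x \<le> y + (n - Max Y)"
    proof (cases "x \<le> Max Y")
      case True
      then show ?thesis using below \<open>x \<le> n\<close> j by simp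
    next
      case False
      then show ?thesis using \<open>x \<le> n\<close> Max_mem by (intro bexI[of _ "Max Y"]) auto
    qed
  qed
  have "Max Y + j - 1 < Max Y + j" "Max Y + j - 1 \<le> n + j" using j Mn by auto
  then obtain y where "y \<in> Y" "Max Y + j - 1 \<le> y + (n - Max Y)"
    using below by blast
  then show "Max Y + j \<le> n + 1" using Y_le[of y] Mn j by linarith
qed

lemma insert_above_mem_interval_summandsI:
  assumes Y: "Y \<in> interval_summands n" and top: "Max Y + j \<le> n + 1"
  shows "insert_above j Y \<in> interval_summands (n + j)"
proof (rule interval_summandsI)
  let ?Y' = "insert_above j Y"
  have Mn: "Max Y \<le> n" using interval_summandsD(5)[OF Y] .
  have "Max ?Y' = Max Y + j"
    using interval_summandsD(1,2)[OF Y] by (intro Max_insert_above) auto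
  then have slack: "n + j - Max ?Y' = n - Max Y" by simp
  show "0 \<in> ?Y'" "?Y' \<subseteq> {..n + j}"
    using interval_summandsD(2,3)[OF Y] Mn unfolding insert_above_def by auto
  fix x assume x: "x \<le> n + j"
  consider "x \<le> Max Y" | "Max Y < x" "x < Max Y + j" | "Max Y + j \<le> x" by linarith
  then have "\<exists>y\<in>?Y'. y \<le> x \<and> x \<le> y + (n - Max Y)"
  proof cases
    case 1
    then have "x \<le> n" using Mn by simp
    then obtain y where "y \<in> Y" "y \<le> x" "x \<le> y + (n - Max Y)"
      using interval_summandsD(6)[OF Y] by blast
    then show ?thesis unfolding insert_above_def by blast
  next
    case 2
    then show ?thesis unfolding insert_above_def
      using top interval_summandsD(4)[OF Y] by (intro bexI[of _ "Max Y"]) auto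
  next
    case 3
    then show ?thesis unfolding insert_above_def
      using x Mn by (intro bexI[of _ "Max Y + j"]) auto
  qed
  then show "\<exists>y\<in>?Y'. y \<le> x \<and> x \<le> y + (n + j - Max ?Y')" unfolding slack .
qed

definition new_summands :: "nat \<Rightarrow> nat set set" where
  "new_summands n = interval_summands (Suc n) - interval_summands n"

lemma finite_new_summands: "finite (new_summands n)"
  unfolding new_summands_def by (simp add: finite_interval_summands)

lemma card_interval_summands_Suc:
  "card (interval_summands (Suc n)) = card (interval_summands n) + card (new_summands n)"
  unfolding new_summands_def
  using card_Diff_subset[OF finite_interval_summands interval_summands_mono]
    card_mono[OF finite_interval_summands interval_summands_mono]
  by simp

lemma atLeast0AtMost_mem_new_summands: "{0..Suc n} \<in> new_summands n"
  unfolding new_summands_def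
  by (simp add: atLeast0AtMost_mem_interval_summands atLeast0AtMost_not_mem_interval_summands)

lemma card_new_summands_pos: "0 < card (new_summands n)"
  using atLeast0AtMost_mem_new_summands finite_new_summands card_gt_0_iff by blast

lemma new_summandD:
  assumes "Y \<in> new_summands m"
  shows "Y \<in> interval_summands (Suc m)" "Y \<notin> interval_summands m" "finite Y" "0 \<in> Y" "Y \<noteq> {}"
  using assms interval_summandsD(1,2) unfolding new_summands_def by auto

lemma insert_above_mem_new_summands:
  assumes Y: "Y \<in> new_summands m" and j: "0 < j" "Max Y + j \<le> m + 2"
  shows "insert_above j Y \<in> new_summands (m + j)"
proof -
  have "insert_above j Y \<in> interval_summands (Suc m + j)"
    using insert_above_mem_interval_summandsI[OF new_summandD(1)[OF Y]] j(2) by simp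
  moreover have "insert_above j Y \<notin> interval_summands (m + j)"
    using insert_above_mem_interval_summandsD(1)[OF new_summandD(3,4)[OF Y] j(1)]
      new_summandD(2)[OF Y] by blast
  ultimately show ?thesis unfolding new_summands_def by simp
qed

lemma insert_above_1_mem_new_summands:
  assumes Y: "Y \<in> new_summands m"
  shows "insert_above 1 Y \<in> new_summands (Suc m)"
  using insert_above_mem_new_summands[OF Y, of 1] interval_summandsD(5)[OF new_summandD(1)[OF Y]]
  by simp

lemma inj_on_insert_above_new_summands: "0 < j \<Longrightarrow> inj_on (insert_above j) (new_summands m)"
  by (rule inj_on_subset[OF inj_on_insert_above]) (auto dest: new_summandD)

lemma card_new_summands_mono: "card (new_summands m) \<le> card (new_summands (Suc m))"
proof (rule card_inj_on_le[OF inj_on_insert_above_new_summands _ finite_new_summands])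
  show "insert_above 1 ` new_summands m \<subseteq> new_summands (Suc m)"
    using insert_above_1_mem_new_summands by blast
qed simp

lemma new_summand_ne_atLeast0AtMost_Max_le:
  assumes "Y \<in> new_summands m" "Y \<noteq> {0..Suc m}"
  shows "Max Y \<le> m"
proof -
  have "Max Y \<noteq> Suc m"
    using interval_summand_Max_eq[OF new_summandD(1)[OF assms(1)]] assms(2) by blast
  then show ?thesis using interval_summandsD(5)[OF new_summandD(1)[OF assms(1)]] by simp
qed

lemma pred_Max_mem_insert_above_1:
  assumes "finite Y" "Y \<noteq> {}"
  shows "Max (insert_above 1 Y) - 1 \<in> insert_above 1 Y"
proof -
  have "Max (insert_above 1 Y) - 1 = Max Y" using Max_insert_above[OF assms, of 1] by simp
  then show ?thesis using Max_in[OF assms] by (simp add: insert_above_def)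
qed

lemma pred_Max_not_mem_insert_above_2:
  assumes "finite Y" "Y \<noteq> {}"
  shows "Max (insert_above 2 Y) - 1 \<notin> insert_above 2 Y"
proof -
  have "Max Y + 1 \<notin> Y"
  proof
    assume "Max Y + 1 \<in> Y"
    with assms(1) have "Max Y + 1 \<le> Max Y" by (rule Max_ge)
    then show False by simp
  qed
  moreover have "Max (insert_above 2 Y) - 1 = Max Y + 1"
    using Max_insert_above[OF assms, of 2] by simp
  ultimately show ?thesis by (simp add: insert_above_def)
qed

text \<open>The interval \<^term>\<open>{0..Suc m}\<close> has no room to be lifted by 2; it is replaced by
  \<^term>\<open>{0..m}\<close>, which is not itself in \<^term>\<open>new_summands m\<close>.\<close>
definition lift_new_summand :: "nat \<Rightarrow> nat set \<Rightarrow> nat set" where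
  "lift_new_summand m Y = insert_above 2 (if Y = {0..Suc m} then {0..m} else Y)"

lemma lift_new_summand_mem:
  assumes Y: "Y \<in> new_summands m"
  shows "lift_new_summand m Y \<in> new_summands (Suc (Suc m))"
proof (cases "Y = {0..Suc m}")
  case True
  have "insert_above 2 {0..m} \<in> interval_summands (Suc m + 2)"
    by (intro insert_above_mem_interval_summandsI atLeast0AtMost_mem_interval_summands) simp_all
  moreover have "insert_above 2 {0..m} \<notin> interval_summands (m + 2)"
    using insert_above_mem_interval_summandsD(2)[of "{0..m}" 2 m] by auto
  ultimately show ?thesis using True unfolding lift_new_summand_def new_summands_def by simp
next
  case False
  then show ?thesis
    using insert_above_mem_new_summands[OF Y, of 2] new_summand_ne_atLeast0AtMost_Max_le[OF Y]
    unfolding lift_new_summand_def by simp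
qed

lemma inj_on_lift_new_summand: "inj_on (lift_new_summand m) (new_summands m)"
proof -
  define r where "r Y = (if Y = {0..Suc m} then {0..m} else Y)" for Y :: "nat set"
  have "inj_on r (new_summands m)"
  proof (rule inj_onI)
    fix Y Z assume Y: "Y \<in> new_summands m" and Z: "Z \<in> new_summands m" and eq: "r Y = r Z"
    have "{0..m} \<notin> new_summands m"
      using atLeast0AtMost_mem_interval_summands[of m m] by (simp add: new_summands_def)
    then show "Y = Z" using Y Z eq unfolding r_def by (auto split: if_splits)
  qed
  moreover have "r Y \<in> {Y. finite Y \<and> Y \<noteq> {}}" if "Y \<in> new_summands m" for Y
    using new_summandD(3,5)[OF that] by (simp add: r_def)
  then have "inj_on (insert_above 2) (r ` new_summands m)"
    by (intro inj_on_subset[OF inj_on_insert_above]) auto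
  ultimately show ?thesis
    unfolding lift_new_summand_def using comp_inj_on[of r _ "insert_above 2"]
    by (simp add: o_def r_def)
qed

text \<open>Lifting the maximum by 1 keeps \<^term>\<open>Max Z - 1 \<in> Z\<close>, lifting it by 2 does not,
  so the two families of lifts are disjoint.\<close>
lemma card_new_summands_fib:
  "card (new_summands (Suc m)) + card (new_summands m) \<le> card (new_summands (Suc (Suc m)))"
proof -
  let ?L1 = "insert_above 1 ` new_summands (Suc m)"
  let ?L2 = "lift_new_summand m ` new_summands m"
  have "Max Z - 1 \<in> Z" if Z: "Z \<in> ?L1" for Z
  proof -
    obtain Y where Y: "Y \<in> new_summands (Suc m)" and Z_eq: "Z = insert_above 1 Y"
      using Z by blast
    show ?thesis
      unfolding Z_eq by (rule pred_Max_mem_insert_above_1[OF new_summandD(3,5)[OF Y]])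
  qed
  moreover have "Max Z - 1 \<notin> Z" if Z: "Z \<in> ?L2" for Z
  proof -
    obtain Y where Y: "Y \<in> new_summands m" and Z_eq: "Z = lift_new_summand m Y"
      using Z by blast
    let ?Y = "if Y = {0..Suc m} then {0..m} else Y"
    have "finite ?Y" "?Y \<noteq> {}" using new_summandD(3,5)[OF Y] by simp_all
    then show ?thesis
      unfolding Z_eq lift_new_summand_def by (rule pred_Max_not_mem_insert_above_2)
  qed
  ultimately have disjoint: "?L1 \<inter> ?L2 = {}" by blast
  have "card (new_summands (Suc m)) + card (new_summands m) = card ?L1 + card ?L2"
    using card_image[OF inj_on_insert_above_new_summands, of 1]
      card_image[OF inj_on_lift_new_summand] by simp
  also have "\<dots> = card (?L1 \<union> ?L2)"
    by (rule card_Un_disjoint[OF _ _ disjoint, symmetric]) (simp_all add: finite_new_summands)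
  also have "\<dots> \<le> card (new_summands (Suc (Suc m)))"
    using insert_above_1_mem_new_summands lift_new_summand_mem
    by (intro card_mono finite_new_summands) blast
  finally show ?thesis .
qed

lemma card_new_summands_less: "card (new_summands (Suc m)) < card (new_summands (Suc (Suc m)))"
  using card_new_summands_fib[of m] card_new_summands_pos[of m] by linarith

lemma card_interval_summands_pos: "0 < card (interval_summands n)"
  using atLeast0AtMost_mem_interval_summands[of 0 n] finite_interval_summands card_gt_0_iff
  by blast

lemma strict_mono_card_interval_summands: "strict_mono (\<lambda>n. card (interval_summands n))"
  unfolding strict_mono_Suc_iff
  using card_interval_summands_Suc card_new_summands_pos by (simp add: add_pos_pos)

lemma card_interval_summands_le_card_new_summands:
  "card (interval_summands n) \<le> card (new_summands (Suc n))"
proof (induction n)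
  case 0
  then show ?case using card_new_summands_pos[of 1] interval_summands_0 by simp
next
  case (Suc n)
  have "card (interval_summands (Suc n)) = card (interval_summands n) + card (new_summands n)"
    by (rule card_interval_summands_Suc)
  also have "\<dots> \<le> card (new_summands (Suc n)) + card (new_summands n)"
    using Suc.IH by simp
  also have "\<dots> \<le> card (new_summands (Suc (Suc n)))"
    by (rule card_new_summands_fib)
  finally show ?case .
qed

lemma three_card_interval_summands_le:
  shows "3 * card (interval_summands n) \<le> 2 * card (interval_summands (Suc n))"
    and "n \<noteq> 1 \<Longrightarrow> 3 * card (interval_summands n) < 2 * card (interval_summands (Suc n))"
proof -
  have "card (interval_summands n) \<le> 2 * card (new_summands n) \<and>
    (n \<noteq> 1 \<longrightarrow> card (interval_summands n) < 2 * card (new_summands n))"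
  proof (cases n)
    case 0
    then show ?thesis using card_new_summands_pos[of 0] interval_summands_0 by simp
  next
    case (Suc j)
    have "card (interval_summands n) \<le> card (new_summands n) + card (new_summands j)"
      using card_interval_summands_Suc[of j] card_interval_summands_le_card_new_summands[of j] Suc
      by simp
    moreover have "card (new_summands j) \<le> card (new_summands n)"
      using card_new_summands_mono[of j] Suc by simp
    moreover have "card (new_summands j) < card (new_summands n)" if "n \<noteq> 1"
      using card_new_summands_less[of "j - 1"] Suc that by (cases j) auto
    ultimately show ?thesis by linarith
  qed
  then show "3 * card (interval_summands n) \<le> 2 * card (interval_summands (Suc n))"
    and "n \<noteq> 1 \<Longrightarrow> 3 * card (interval_summands n) < 2 * card (interval_summands (Suc n))"
    using card_interval_summands_Suc[of n] by linarith+
qed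

lemma card_interval_summands_growth:
  "(j + 2) * card (interval_summands n) \<le> 2 * card (interval_summands (n + j))"
proof (induction j)
  case 0
  then show ?case by simp
next
  case (Suc j)
  let ?c = "card (interval_summands n)"
  have "2 * ((j + 3) * ?c) \<le> 3 * ((j + 2) * ?c)" by (simp add: algebra_simps)
  then show ?case
    using Suc.IH three_card_interval_summands_le(1)[of "n + j"] by simp
qed

lemma card_interval_summands_growth_strict:
  assumes "0 < j" "j = 1 \<Longrightarrow> n \<noteq> 1"
  shows "(j + 2) * card (interval_summands n) < 2 * card (interval_summands (n + j))"
proof (cases "j = 1")
  case True
  then show ?thesis using three_card_interval_summands_le(2)[of n] assms(2) by simp
next
  case False
  then obtain i where j: "j = Suc i" "0 < i" using assms(1) by (cases j) auto
  let ?c = "card (interval_summands n)"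
  have "2 * ((i + 3) * ?c) < 3 * ((i + 2) * ?c)"
    using mult_pos_pos[OF j(2) card_interval_summands_pos[of n]] by (simp add: algebra_simps)
  moreover have "(i + 2) * ?c \<le> 2 * card (interval_summands (n + i))"
    by (rule card_interval_summands_growth)
  moreover have "3 * card (interval_summands (n + i)) \<le> 2 * card (interval_summands (n + j))"
    using three_card_interval_summands_le(1)[of "n + i"] j(1) by simp
  ultimately have "(i + 3) * ?c < 2 * card (interval_summands (n + j))" by linarith
  moreover have "j + 2 = i + 3" using j(1) by simp
  ultimately show ?thesis by (simp only:)
qed

section \<open>Filling the gaps of a set\<close>

lemma zero_summand_partner_bounds:
  assumes S: "sumset B D = C" and "0 \<in> B" "finite C" "C \<noteq> {}" "e \<in> D"
  shows "Min C \<le> e" "Max B + e \<le> Max C"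
proof -
  have "finite B" "B \<noteq> {}" using summand_finite_nonempty[OF S assms(3,4)] by auto
  then have "Max B \<in> B" by (rule Max_in)
  then have "0 + e \<in> sumset B D" "Max B + e \<in> sumset B D"
    using assms(2,5) unfolding mem_sumset_iff by blast+
  then have "0 + e \<in> C" "Max B + e \<in> C" using S by simp_all
  then show "Min C \<le> e" "Max B + e \<le> Max C" using assms(3) by simp_all
qed

lemma Min_mem_zero_summand_partner:
  assumes S: "sumset B D = C" and "0 \<in> B" "finite C" "C \<noteq> {}"
  shows "Min C \<in> D"
proof -
  have "Min C \<in> sumset B D" using S assms(3,4) by simp
  then obtain b e where "b \<in> B" "e \<in> D" "Min C = b + e" unfolding mem_sumset_iff by blast
  moreover have "Min C \<le> e" using zero_summand_partner_bounds(1)[OF assms \<open>e \<in> D\<close>] .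
  ultimately show ?thesis by simp
qed

text \<open>The positions \<^term>\<open>x\<close> with \<^term>\<open>x + Min C \<notin> C\<close> are forbidden for every summand
  containing 0, so filling them in below \<^term>\<open>Max B\<close> loses no information about \<^term>\<open>B\<close>.\<close>
definition fill_gaps :: "nat set \<Rightarrow> nat set \<Rightarrow> nat set" where
  "fill_gaps C B = B \<union> {x. x \<le> Max B \<and> x + Min C \<notin> C}"

lemma Max_fill_gaps:
  assumes "finite B" "B \<noteq> {}"
  shows "Max (fill_gaps C B) = Max B"
proof (rule Max_eqI)
  have "fill_gaps C B \<subseteq> {..Max B}" unfolding fill_gaps_def using assms(1) by auto
  then show "finite (fill_gaps C B)" "\<And>y. y \<in> fill_gaps C B \<Longrightarrow> y \<le> Max B"
    using finite_subset by auto
  show "Max B \<in> fill_gaps C B" unfolding fill_gaps_def using assms by simp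
qed

lemma fill_gaps_Int:
  assumes "B \<in> zero_summands C" "finite C" "C \<noteq> {}"
  shows "fill_gaps C B \<inter> {x. x + Min C \<in> C} = B"
proof -
  obtain D where S: "sumset B D = C" and "0 \<in> B"
    using assms(1) unfolding zero_summands_def by blast
  have "Min C \<in> D" using Min_mem_zero_summand_partner[OF S \<open>0 \<in> B\<close> assms(2,3)] .
  then have "b + Min C \<in> C" if "b \<in> B" for b using S that mem_sumset_iff by blast
  then show ?thesis unfolding fill_gaps_def by auto
qed

lemma fill_gaps_mem_interval_summands:
  assumes B: "B \<in> zero_summands C" and C: "finite C" "C \<noteq> {}"
  shows "fill_gaps C B \<in> interval_summands (Max C - Min C)"
proof -
  obtain D where S: "sumset B D = C" and "0 \<in> B" using B unfolding zero_summands_def by blast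
  have fin: "finite B" "B \<noteq> {}" using summand_finite_nonempty[OF S C] by auto
  note bounds = zero_summand_partner_bounds[OF S \<open>0 \<in> B\<close> C]
  let ?a = "Min C" and ?\<mu> = "Max B"
  have top: "?\<mu> + ?a \<le> Max C"
    using bounds(2) Min_mem_zero_summand_partner[OF S \<open>0 \<in> B\<close> C] .
  show ?thesis
  proof (rule interval_summandsI)
    show "0 \<in> fill_gaps C B" unfolding fill_gaps_def using \<open>0 \<in> B\<close> by simp
    show "fill_gaps C B \<subseteq> {..Max C - ?a}"
    proof
      fix y assume "y \<in> fill_gaps C B"
      then have "y \<le> ?\<mu>" unfolding fill_gaps_def using fin by auto
      then show "y \<in> {..Max C - ?a}" using top by simp
    qed
    fix x assume x: "x \<le> Max C - ?a"
    have "\<exists>y\<in>fill_gaps C B. y \<le> x \<and> x \<le> y + (Max C - ?a - ?\<mu>)"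
    proof (cases "x \<le> ?\<mu> \<and> x + ?a \<in> C")
      case True
      then have "x + ?a \<in> sumset B D" using S by simp
      then obtain b e where "b \<in> B" "e \<in> D" "x + ?a = b + e"
        unfolding mem_sumset_iff by blast
      moreover have "?a \<le> e" "?\<mu> + e \<le> Max C" using bounds \<open>e \<in> D\<close> by auto
      ultimately show ?thesis unfolding fill_gaps_def by (intro bexI[of _ b]) auto
    next
      case False
      then consider "x \<le> ?\<mu>" "x + ?a \<notin> C" | "?\<mu> < x" by linarith
      then show ?thesis
      proof cases
        case 1
        then show ?thesis unfolding fill_gaps_def by (intro bexI[of _ x]) auto
      next
        case 2
        then show ?thesis
          unfolding fill_gaps_def using x fin top by (intro bexI[of _ ?\<mu>]) auto
      qed
    qed
    then show "\<exists>y\<in>fill_gaps C B. y \<le> x \<and> x \<le> y + (Max C - ?a - Max (fill_gaps C B))"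
      using Max_fill_gaps[OF fin] by simp
  qed
qed

lemma card_zero_summands_le_card_interval_summands:
  assumes C: "finite C" "C \<noteq> {}"
  shows "card (zero_summands C) \<le> card (interval_summands (Max C - Min C))"
    and "z \<in> {Min C..Max C} - C \<Longrightarrow>
      card (zero_summands C) < card (interval_summands (Max C - Min C))"
proof -
  let ?T = "interval_summands (Max C - Min C)"
  have "inj_on (fill_gaps C) (zero_summands C)"
  proof (rule inj_onI)
    fix Y Z assume Y: "Y \<in> zero_summands C" and Z: "Z \<in> zero_summands C"
      and eq: "fill_gaps C Y = fill_gaps C Z"
    have "Y = fill_gaps C Y \<inter> {x. x + Min C \<in> C}" using fill_gaps_Int[OF Y C] by simp
    also have "\<dots> = Z" using fill_gaps_Int[OF Z C] eq by simp
    finally show "Y = Z" .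
  qed
  then have card_eq: "card (fill_gaps C ` zero_summands C) = card (zero_summands C)"
    by (rule card_image)
  have sub: "fill_gaps C ` zero_summands C \<subseteq> ?T"
    using fill_gaps_mem_interval_summands[OF _ C] by blast
  then show "card (zero_summands C) \<le> card ?T"
    using card_mono[OF finite_interval_summands] card_eq by metis
  assume z: "z \<in> {Min C..Max C} - C"
  have "{0..z - Min C} \<notin> fill_gaps C ` zero_summands C"
  proof
    assume "{0..z - Min C} \<in> fill_gaps C ` zero_summands C"
    then obtain B where B: "B \<in> zero_summands C" "fill_gaps C B = {0..z - Min C}" by auto
    then have fin: "finite B" "B \<noteq> {}"
      using summand_finite_nonempty[OF _ C] unfolding zero_summands_def by blast+
    then have "Max B = z - Min C" using Max_fill_gaps[OF fin, of C] B(2) by simp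
    then have "z - Min C \<in> B" using Max_in[OF fin] by simp
    then have "z - Min C + Min C \<in> C" using fill_gaps_Int[OF B(1) C] by blast
    then show False using z by simp
  qed
  moreover have "{0..z - Min C} \<in> ?T"
    using z by (intro atLeast0AtMost_mem_interval_summands) auto
  ultimately have "fill_gaps C ` zero_summands C \<subset> ?T" using sub by blast
  then show "card (zero_summands C) < card ?T"
    using psubset_card_mono[OF finite_interval_summands] card_eq by metis
qed

lemma d_le_card_interval_summands:
  assumes C: "finite C" "C \<noteq> {}" and n: "Max C \<le> Min C + n"
  shows "d C \<le> (Min C + 1) * card (interval_summands n)"
    and "C \<noteq> {Min C..Min C + n} \<Longrightarrow> d C < (Min C + 1) * card (interval_summands n)"
proof -
  let ?N = "card (zero_summands C)" and ?T = "\<lambda>m. card (interval_summands m)"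
  note card_le = card_zero_summands_le_card_interval_summands[OF C]
  note T_le = strict_mono_less_eq[OF strict_mono_card_interval_summands]
  note T_less = strict_mono_less[OF strict_mono_card_interval_summands]
  have "?T (Max C - Min C) \<le> ?T n" using T_le n by simp
  then have "?N \<le> ?T n" using card_le(1) by linarith
  then show "d C \<le> (Min C + 1) * ?T n"
    using d_le_card_zero_summands[OF C] by (meson le_trans mult_le_mono2)
  assume "C \<noteq> {Min C..Min C + n}"
  have "?N < ?T n"
  proof (cases "Max C < Min C + n")
    case True
    moreover have "Min C \<le> Max C" using C by (meson Max_ge Min_in)
    ultimately have "?T (Max C - Min C) < ?T n" using T_less by simp
    then show ?thesis using card_le(1) by linarith
  next
    case False
    then have "Max C = Min C + n" using n by simp
    then have "C \<noteq> {Min C..Max C}" using \<open>C \<noteq> {Min C..Min C + n}\<close> by simp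
    moreover have "C \<subseteq> {Min C..Max C}" using C by auto
    ultimately obtain z where "z \<in> {Min C..Max C} - C"
      using psubset_imp_ex_mem[OF psubsetI] by blast
    then show ?thesis using card_le(2) \<open>Max C = Min C + n\<close> by simp
  qed
  then have "(Min C + 1) * ?N < (Min C + 1) * ?T n" by (intro mult_less_mono2) simp_all
  then show "d C < (Min C + 1) * ?T n" using d_le_card_zero_summands[OF C] by linarith
qed

theorem mainTheorem9:
  fixes k :: nat and A :: "nat set"
  assumes "k \<ge> 1" and "A \<noteq> {}" and "A \<subset> {1..k}"
  shows "d {1..k} \<ge> d A \<and> (k \<noteq> 3 \<longrightarrow> d {1..k} > d A)"
proof -
  let ?T = "\<lambda>n. card (interval_summands n)"
  define a where "a = Min A"
  have fin: "finite A" using assms(3) finite_subset by blast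
  then have "a \<in> A" "Max A \<in> A" using assms(2) unfolding a_def by simp_all
  then have a: "1 \<le> a" "a \<le> k" "Max A \<le> a + (k - a)" using assms(3) by auto
  note dA = d_le_card_interval_summands[OF fin assms(2), folded a_def, OF a(3)]
  have G: "(a + 1) * ?T (k - a) \<le> 2 * ?T (k - 1)"
    "2 \<le> a \<Longrightarrow> k \<noteq> 3 \<Longrightarrow> (a + 1) * ?T (k - a) < 2 * ?T (k - 1)"
    using card_interval_summands_growth[of "a - 1" "k - a"]
      card_interval_summands_growth_strict[of "a - 1" "k - a"] a
    by (simp_all add: numeral_eq_Suc)
  have dk: "2 * ?T (k - 1) \<le> d {1..k}"
    using card_zero_summands_interval_le_d[of 1 "k - 1"] assms(1) by simp
  have "d A < d {1..k}" if "k \<noteq> 3"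
  proof (cases "a = 1")
    case True
    then have "A \<noteq> {a..a + (k - a)}" using assms(3) a(2) by auto
    then show ?thesis using dA(2) G(1) dk by linarith
  next
    case False
    then show ?thesis using dA(1) G(2)[OF _ that] a(1) dk by linarith
  qed
  then show ?thesis using dA(1) G(1) dk by linarith
qed

end
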